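(* Let $\phi$ be a topological flow on a compact manifold $M$ (with a metric $\mathrm{dist}$ inducing its topology). If the limit set $L(\phi)$ is a finite set consisting of singularities of $\phi$, each of which is Lyapunov stable or Lyapunov unstable, then $\phi$ has the oriented shadowing property.
   Context: A topological flow is a continuous map $\phi:\mathbb{R}\times M\to M$ with $\phi(0,x)=x$, $\phi(s+t,x)=\phi(s,\phi(t,x))$. A singularity is a point fixed by all $\phi(t,\cdot)$. A singularity $p$ is Lyapunov stable if for every neighborhood $V$ of $p$ there is a neighborhood $U$ of $p$ with $\phi(t,x)\in V$ for all $t\ge0$, $x\in U$; Lyapunov unstable if the same holds for $t\le0$. $L(\phi)$ is the union over $x\in M$ of the $\omega$-limit and $\alpha$-limit sets of $x$. A $d$-pseudotrajectory is a map $\xi:\mathbb{R}\to M$ with $\mathrm{dist}(\xi(t+s),\phi(s,\xi(t)))<d$ for all $t\in\mathbb{R}$, $s\in[0,1]$. $\mathrm{Rep}$ is the set of orientation-preserving homeomorphisms of $\mathbb{R}$. $\phi$ has the oriented shadowing property if for every $\varepsilon>0$ there is $d>0$ such that for every $d$-pseudotrajectory $\xi$ there are $x\in M$, $h\in\mathrm{Rep}$ with $\mathrm{dist}(\xi(t),\phi(h(t),x))<\varepsilon$ for all $t\in\mathbb{R}$. *)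

theory Defs
  imports "HOL-Analysis.Analysis"
begin

text \<open>A (topological) manifold of dimension DIM('n) without boundary, as a subset M of a
metric space: every point has a neighbourhood in M homeomorphic to an open subset of
the Euclidean space 'n. (Hausdorff is automatic in a metric space; second countability
is automatic for compact metric spaces.)\<close>
definition topological_manifold :: "'n::euclidean_space itself \<Rightarrow> 'a::metric_space set \<Rightarrow> bool" where
  "topological_manifold _ M \<longleftrightarrow>
     (\<forall>x\<in>M. \<exists>U. openin (top_of_set M) U \<and> x \<in> U \<and>
        (\<exists>V::'n set. open V \<and> U homeomorphic V))"

definition topological_flow :: "(real \<Rightarrow> 'a::metric_space \<Rightarrow> 'a) \<Rightarrow> 'a set \<Rightarrow> bool" where
  "topological_flow \<phi> M \<longleftrightarrow>
     continuous_on (UNIV \<times> M) (\<lambda>(t, x). \<phi> t x) \<and>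
     (\<forall>t. \<forall>x\<in>M. \<phi> t x \<in> M) \<and>
     (\<forall>x\<in>M. \<phi> 0 x = x) \<and>
     (\<forall>s t. \<forall>x\<in>M. \<phi> (s + t) x = \<phi> s (\<phi> t x))"

definition singularity :: "(real \<Rightarrow> 'a \<Rightarrow> 'a) \<Rightarrow> 'a set \<Rightarrow> 'a \<Rightarrow> bool" where
  "singularity \<phi> M p \<longleftrightarrow> p \<in> M \<and> (\<forall>t. \<phi> t p = p)"

text \<open>Neighbourhoods of p in M are represented as traces on M of open sets of the ambient space.\<close>
definition lyapunov_stable :: "(real \<Rightarrow> 'a::metric_space \<Rightarrow> 'a) \<Rightarrow> 'a set \<Rightarrow> 'a \<Rightarrow> bool" where
  "lyapunov_stable \<phi> M p \<longleftrightarrow>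
     (\<forall>V. open V \<and> p \<in> V \<longrightarrow>
        (\<exists>U. open U \<and> p \<in> U \<and> (\<forall>x\<in>U \<inter> M. \<forall>t\<ge>0. \<phi> t x \<in> V)))"

definition lyapunov_unstable :: "(real \<Rightarrow> 'a::metric_space \<Rightarrow> 'a) \<Rightarrow> 'a set \<Rightarrow> 'a \<Rightarrow> bool" where
  "lyapunov_unstable \<phi> M p \<longleftrightarrow>
     (\<forall>V. open V \<and> p \<in> V \<longrightarrow>
        (\<exists>U. open U \<and> p \<in> U \<and> (\<forall>x\<in>U \<inter> M. \<forall>t\<le>0. \<phi> t x \<in> V)))"

definition omega_limit :: "(real \<Rightarrow> 'a::metric_space \<Rightarrow> 'a) \<Rightarrow> 'a \<Rightarrow> 'a set" where
  "omega_limit \<phi> x = {y. \<exists>t::nat \<Rightarrow> real. filterlim t at_top sequentially \<and>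
                              ((\<lambda>n. \<phi> (t n) x) \<longlongrightarrow> y) sequentially}"

definition alpha_limit :: "(real \<Rightarrow> 'a::metric_space \<Rightarrow> 'a) \<Rightarrow> 'a \<Rightarrow> 'a set" where
  "alpha_limit \<phi> x = {y. \<exists>t::nat \<Rightarrow> real. filterlim t at_bot sequentially \<and>
                              ((\<lambda>n. \<phi> (t n) x) \<longlongrightarrow> y) sequentially}"

definition limit_set :: "(real \<Rightarrow> 'a::metric_space \<Rightarrow> 'a) \<Rightarrow> 'a set \<Rightarrow> 'a set" where
  "limit_set \<phi> M = (\<Union>x\<in>M. omega_limit \<phi> x \<union> alpha_limit \<phi> x)"

definition pseudotrajectory :: "(real \<Rightarrow> 'a::metric_space \<Rightarrow> 'a) \<Rightarrow> 'a set \<Rightarrow> real \<Rightarrow> (real \<Rightarrow> 'a) \<Rightarrow> bool" where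
  "pseudotrajectory \<phi> M d \<xi> \<longleftrightarrow>
     (\<forall>t. \<xi> t \<in> M) \<and>
     (\<forall>t. \<forall>s\<in>{0..1}. dist (\<xi> (t + s)) (\<phi> s (\<xi> t)) < d)"

text \<open>Rep: orientation-preserving (i.e. monotone increasing) homeomorphisms of the real line.\<close>
definition Rep :: "(real \<Rightarrow> real) set" where
  "Rep = {h. (\<exists>g. homeomorphism UNIV UNIV h g) \<and> mono h}"

definition oriented_shadowing :: "(real \<Rightarrow> 'a::metric_space \<Rightarrow> 'a) \<Rightarrow> 'a set \<Rightarrow> bool" where
  "oriented_shadowing \<phi> M \<longleftrightarrow>
     (\<forall>\<epsilon>>0. \<exists>d>0. \<forall>\<xi>. pseudotrajectory \<phi> M d \<xi> \<longrightarrow>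
        (\<exists>x\<in>M. \<exists>h\<in>Rep. \<forall>t. dist (\<xi> t) (\<phi> (h t) x) < \<epsilon>))"

end

theory Submission
  imports Defs
begin

text \<open>Choose \<rho> below a quarter of the distances between the finitely many points of the limit
  set L. A stable point p traps pseudotrajectories: once within r of p they stay within 2\<rho> of p
  forever, because attraction to an isolated stable point is uniform on a compact part of its
  basin; an unstable point traps them in backward time. Away from L every orbit comes close to a
  stable point within a uniform time T, since an unstable point attracts no orbit but itself.
  Hence a pseudotrajectory either stays near a single point of L, which as a fixed point shadows
  it, or it leaves an unstable point at some time \<sigma> and is near a stable one before time
  \<sigma> + T + 1; the orbit of its position at time \<sigma> then shadows it with the time shift
  t \<mapsto> t - \<sigma>.\<close>

section \<open>Flows and limit sets\<close>

lemma flow_in_M: "topological_flow \<phi> M \<Longrightarrow> x \<in> M \<Longrightarrow> \<phi> t x \<in> M"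
  unfolding topological_flow_def by blast

lemma flow_zero: "topological_flow \<phi> M \<Longrightarrow> x \<in> M \<Longrightarrow> \<phi> 0 x = x"
  unfolding topological_flow_def by blast

lemma flow_add: "topological_flow \<phi> M \<Longrightarrow> x \<in> M \<Longrightarrow> \<phi> (s + t) x = \<phi> s (\<phi> t x)"
  unfolding topological_flow_def by blast

lemma flow_inverse: "topological_flow \<phi> M \<Longrightarrow> x \<in> M \<Longrightarrow> \<phi> (- t) (\<phi> t x) = x"
  using flow_add[of \<phi> M x "- t" t] flow_zero[of \<phi> M x] by simp

lemma continuous_on_flow_time:
  assumes "topological_flow \<phi> M"
  shows "continuous_on M (\<phi> t)"
proof -
  have "continuous_on (UNIV \<times> M) (\<lambda>(t, x). \<phi> t x)"
    using assms by (simp add: topological_flow_def)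
  then have "continuous_on ((\<lambda>x. (t, x)) ` M) (\<lambda>(t, x). \<phi> t x)"
    by (rule continuous_on_subset) auto
  then have "continuous_on M ((\<lambda>(t, x). \<phi> t x) \<circ> (\<lambda>x. (t, x)))"
    by (intro continuous_on_compose continuous_intros)
  then show ?thesis by (simp add: o_def)
qed

lemma flow_uniformly_continuous:
  assumes "topological_flow \<phi> M" "compact M" "e > 0"
  obtains \<delta> where "\<delta> > 0"
    "\<And>u y z. u \<in> {a..b} \<Longrightarrow> y \<in> M \<Longrightarrow> z \<in> M \<Longrightarrow> dist y z < \<delta> \<Longrightarrow> dist (\<phi> u y) (\<phi> u z) < e"
proof -
  have "continuous_on (UNIV \<times> M) (\<lambda>(t, x). \<phi> t x)"
    using assms by (simp add: topological_flow_def)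
  then have "continuous_on ({a..b} \<times> M) (\<lambda>(t, x). \<phi> t x)"
    by (rule continuous_on_subset) auto
  then have "uniformly_continuous_on ({a..b} \<times> M) (\<lambda>(t, x). \<phi> t x)"
    by (rule compact_uniformly_continuous) (intro compact_Times compact_Icc assms(2))
  then obtain \<delta> where "\<delta> > 0" and \<delta>: "\<And>w w'. w \<in> {a..b} \<times> M \<Longrightarrow> w' \<in> {a..b} \<times> M \<Longrightarrow>
      dist w' w < \<delta> \<Longrightarrow> dist ((\<lambda>(t, x). \<phi> t x) w') ((\<lambda>(t, x). \<phi> t x) w) < e"
    using uniformly_continuous_onE assms(3) by blast
  show thesis
  proof (rule that[OF \<open>\<delta> > 0\<close>])
    fix u y z assume "u \<in> {a..b}" "y \<in> M" "z \<in> M" "dist y z < \<delta>"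
    then show "dist (\<phi> u y) (\<phi> u z) < e"
      using \<delta>[of "(u, z)" "(u, y)"] by (simp add: dist_Pair_Pair)
  qed
qed

lemma topological_flow_reverse:
  assumes "topological_flow \<phi> M"
  shows "topological_flow (\<lambda>t. \<phi> (- t)) M"
proof -
  have "continuous_on (UNIV \<times> M) (\<lambda>(t, x). \<phi> t x)"
    using assms by (simp add: topological_flow_def)
  then have "continuous_on ((\<lambda>(t, x). (- t, x)) ` (UNIV \<times> M)) (\<lambda>(t, x). \<phi> t x)"
    by (rule continuous_on_subset) auto
  moreover have "continuous_on (UNIV \<times> M) (\<lambda>(t::real, x). (- t, x))"
    by (simp add: case_prod_unfold continuous_intros)
  ultimately have "continuous_on (UNIV \<times> M) ((\<lambda>(t, x). \<phi> t x) \<circ> (\<lambda>(t, x). (- t, x)))"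
    by (intro continuous_on_compose)
  moreover have "\<phi> (- (s + t)) x = \<phi> (- s) (\<phi> (- t) x)" if "x \<in> M" for s t x
    using flow_add[OF assms that, of "- s" "- t"] by simp
  ultimately show ?thesis
    using assms unfolding topological_flow_def by (simp add: o_def case_prod_unfold)
qed

lemma lyapunov_stable_reverse:
  assumes "lyapunov_unstable \<phi> M p"
  shows "lyapunov_stable (\<lambda>t. \<phi> (- t)) M p"
  unfolding lyapunov_stable_def
proof (intro allI impI)
  fix V assume "open V \<and> p \<in> V"
  then obtain U where "open U" "p \<in> U" "\<forall>x\<in>U \<inter> M. \<forall>t\<le>0. \<phi> t x \<in> V"
    using assms unfolding lyapunov_unstable_def by blast
  then show "\<exists>U. open U \<and> p \<in> U \<and> (\<forall>x\<in>U \<inter> M. \<forall>t\<ge>0. \<phi> (- t) x \<in> V)"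
    by (intro exI[of _ U]) auto
qed

lemma omega_limit_reverse: "omega_limit (\<lambda>t. \<phi> (- t)) x \<subseteq> alpha_limit \<phi> x"
proof
  fix y assume "y \<in> omega_limit (\<lambda>t. \<phi> (- t)) x"
  then obtain tn where "filterlim tn at_top sequentially" "(\<lambda>n. \<phi> (- tn n) x) \<longlonglongrightarrow> y"
    unfolding omega_limit_def by blast
  moreover from this(1) have "filterlim (\<lambda>n. - tn n) at_bot sequentially"
    by (simp add: filterlim_uminus_at_bot)
  ultimately show "y \<in> alpha_limit \<phi> x"
    unfolding alpha_limit_def by blast
qed

lemma omega_limit_nonempty:
  assumes "topological_flow \<phi> M" "compact M" "x \<in> M"
  shows "omega_limit \<phi> x \<noteq> {}"
proof -
  have "\<forall>n. \<phi> (real n) x \<in> M"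
    using assms flow_in_M by blast
  then obtain l r where "strict_mono (r :: nat \<Rightarrow> nat)" and l: "((\<lambda>n. \<phi> (real n) x) \<circ> r) \<longlonglongrightarrow> l"
    by (rule seq_compactE[OF compact_imp_seq_compact[OF assms(2)]])
  moreover have "filterlim (\<lambda>n. real (r n)) at_top sequentially"
    using filterlim_compose[OF filterlim_real_sequentially filterlim_subseq[OF \<open>strict_mono r\<close>]]
    by (simp add: o_def)
  ultimately show ?thesis
    unfolding omega_limit_def by (auto simp: o_def)
qed

lemma omega_limit_visits:
  assumes "y \<in> omega_limit \<phi> x" "open G" "y \<in> G"
  obtains t where "t \<ge> 0" "\<phi> t x \<in> G"
proof -
  obtain tn where tn: "filterlim tn at_top sequentially" "(\<lambda>n. \<phi> (tn n) x) \<longlonglongrightarrow> y"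
    using assms(1) unfolding omega_limit_def by blast
  have "eventually (\<lambda>n. tn n \<ge> 0 \<and> \<phi> (tn n) x \<in> G) sequentially"
    using filterlim_at_top[THEN iffD1, OF tn(1), rule_format, of 0] topological_tendstoD[OF tn(2) assms(2,3)]
    by (rule eventually_conj)
  then show thesis
    using that eventually_happens'[OF sequentially_bot] by blast
qed

lemma omega_limit_subset_closed:
  assumes "closed F" "\<And>t. t \<ge> 0 \<Longrightarrow> \<phi> t x \<in> F"
  shows "omega_limit \<phi> x \<subseteq> F"
proof
  fix y assume "y \<in> omega_limit \<phi> x"
  then obtain tn where tn: "filterlim tn at_top sequentially" "(\<lambda>n. \<phi> (tn n) x) \<longlonglongrightarrow> y"
    unfolding omega_limit_def by blast
  have "eventually (\<lambda>n. \<phi> (tn n) x \<in> F) sequentially"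
    using filterlim_at_top[THEN iffD1, OF tn(1), rule_format, of 0]
    by (rule eventually_mono) (rule assms(2))
  then show "y \<in> F"
    using Lim_in_closed_set[OF assms(1) _ _ tn(2)] by simp
qed

text \<open>Flowing the approach to q backwards in time keeps x in every neighbourhood of q.\<close>
lemma lyapunov_unstable_in_omega_limit:
  assumes fl: "topological_flow \<phi> M" and x: "x \<in> M"
    and un: "lyapunov_unstable \<phi> M q" and q: "q \<in> omega_limit \<phi> x"
  shows "x = q"
proof (rule ccontr)
  assume "x \<noteq> q"
  then have "open (- {x})" "q \<in> - {x}"
    by auto
  then obtain U where U: "open U" "q \<in> U" "\<forall>y\<in>U \<inter> M. \<forall>t\<le>0. \<phi> t y \<in> - {x}"
    using un unfolding lyapunov_unstable_def by blast
  obtain t where "t \<ge> 0" "\<phi> t x \<in> U"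
    using omega_limit_visits[OF q U(1,2)] .
  then have "\<phi> (- t) (\<phi> t x) \<noteq> x"
    using U(3) flow_in_M[OF fl x] by simp
  then show False
    using flow_inverse[OF fl x] by simp
qed

lemma uniform_hitting_time:
  assumes fl: "topological_flow \<phi> M" and C: "compact C" "C \<subseteq> M" and G: "open G"
    and hit: "\<And>x. x \<in> C \<Longrightarrow> \<exists>t\<ge>0. \<phi> t x \<in> G"
  obtains T where "T \<ge> 0" "\<And>x. x \<in> C \<Longrightarrow> \<exists>t\<in>{0..T}. \<phi> t x \<in> G"
proof -
  have "\<forall>x\<in>C. \<exists>t A. t \<ge> 0 \<and> open A \<and> x \<in> A \<and> (\<forall>y\<in>A \<inter> M. \<phi> t y \<in> G)"
  proof
    fix x assume x: "x \<in> C"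
    obtain t where t: "t \<ge> 0" "\<phi> t x \<in> G"
      using hit[OF x] by blast
    obtain A where A: "open A" "A \<inter> M = \<phi> t -` G \<inter> M"
      using continuous_on_flow_time[OF fl, of t] G unfolding continuous_on_open_invariant by blast
    have "x \<in> A"
      using A(2) t(2) x C(2) by blast
    then show "\<exists>t A. t \<ge> 0 \<and> open A \<and> x \<in> A \<and> (\<forall>y\<in>A \<inter> M. \<phi> t y \<in> G)"
      using t A by blast
  qed
  then obtain tx Ax where tA: "\<forall>x\<in>C.
      tx x \<ge> 0 \<and> open (Ax x) \<and> x \<in> Ax x \<and> (\<forall>y\<in>Ax x \<inter> M. \<phi> (tx x) y \<in> G)"
    by metis
  obtain C' where C': "C' \<subseteq> C" "finite C'" "C \<subseteq> (\<Union>c\<in>C'. Ax c)"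
  proof (rule compactE_image[OF C(1)])
    show "open (Ax x)" if "x \<in> C" for x
      using tA that by blast
    show "C \<subseteq> (\<Union>x\<in>C. Ax x)"
      using tA by blast
  qed
  define T where "T = Max (insert 0 (tx ` C'))"
  show thesis
  proof (rule that)
    show "T \<ge> 0"
      unfolding T_def using C' by simp
    fix x assume x: "x \<in> C"
    then obtain c where c: "c \<in> C'" "x \<in> Ax c"
      using C' by blast
    have "\<phi> (tx c) x \<in> G"
      using tA c x C' C(2) by blast
    moreover have "tx c \<in> {0..T}"
      using tA c C' unfolding T_def by auto
    ultimately show "\<exists>t\<in>{0..T}. \<phi> t x \<in> G"
      by blast
  qed
qed

section \<open>Pseudotrajectories\<close>

lemma pseudotrajectory_in_M: "pseudotrajectory \<phi> M d \<xi> \<Longrightarrow> \<xi> t \<in> M"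
  unfolding pseudotrajectory_def by blast

lemma pseudotrajectory_dist:
  "pseudotrajectory \<phi> M d \<xi> \<Longrightarrow> s \<in> {0..1} \<Longrightarrow> dist (\<xi> (t + s)) (\<phi> s (\<xi> t)) < d"
  unfolding pseudotrajectory_def by blast

lemma pseudotrajectory_mono:
  "pseudotrajectory \<phi> M d \<xi> \<Longrightarrow> d \<le> d' \<Longrightarrow> pseudotrajectory \<phi> M d' \<xi>"
  unfolding pseudotrajectory_def by (meson less_le_trans)

definition tracks :: "(real \<Rightarrow> 'a::metric_space \<Rightarrow> 'a) \<Rightarrow> (real \<Rightarrow> 'a) \<Rightarrow> real \<Rightarrow> real \<Rightarrow> bool" where
  "tracks \<phi> \<xi> S \<eta> \<longleftrightarrow> (\<forall>t. \<forall>s\<in>{0..S}. dist (\<xi> (t + s)) (\<phi> s (\<xi> t)) < \<eta>)"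

lemma tracksD: "tracks \<phi> \<xi> S \<eta> \<Longrightarrow> s \<in> {0..S} \<Longrightarrow> dist (\<xi> (t + s)) (\<phi> s (\<xi> t)) < \<eta>"
  unfolding tracks_def by blast

lemma pseudotrajectory_tracks_nat:
  assumes fl: "topological_flow \<phi> M" and cM: "compact M"
  shows "\<forall>\<eta>>0. \<exists>d>0. \<forall>\<xi>. pseudotrajectory \<phi> M d \<xi> \<longrightarrow> tracks \<phi> \<xi> (real n) \<eta>"
proof (induction n)
  case 0
  show ?case
    using flow_zero[OF fl] by (auto simp: tracks_def pseudotrajectory_def intro!: exI[of _ 1])
next
  case (Suc n)
  show ?case
  proof (intro allI impI)
    fix \<eta> :: real assume "\<eta> > 0"
    then obtain \<delta> where "\<delta> > 0" and \<delta>: "\<And>u y z. u \<in> {0..1} \<Longrightarrow> y \<in> M \<Longrightarrow> z \<in> M \<Longrightarrow>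
        dist y z < \<delta> \<Longrightarrow> dist (\<phi> u y) (\<phi> u z) < \<eta> / 2"
      using flow_uniformly_continuous[OF fl cM, of "\<eta> / 2"] by (metis half_gt_zero)
    obtain d where "d > 0" and d: "\<And>\<xi>. pseudotrajectory \<phi> M d \<xi> \<Longrightarrow> tracks \<phi> \<xi> (real n) (min \<delta> \<eta>)"
      using Suc.IH \<open>\<delta> > 0\<close> \<open>\<eta> > 0\<close> by (meson min_less_iff_conj)
    have "tracks \<phi> \<xi> (real (Suc n)) \<eta>" if ps: "pseudotrajectory \<phi> M (min d (\<eta> / 2)) \<xi>" for \<xi>
      unfolding tracks_def
    proof (intro allI ballI)
      fix t s assume s: "s \<in> {0..real (Suc n)}"
      have n: "tracks \<phi> \<xi> (real n) (min \<delta> \<eta>)"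
        using d pseudotrajectory_mono[OF ps] by simp
      show "dist (\<xi> (t + s)) (\<phi> s (\<xi> t)) < \<eta>"
      proof (cases "s \<le> real n")
        case True
        then show ?thesis
          using tracksD[OF n, of s t] s by simp
      next
        case False
        define u where "u = s - real n"
        have u: "u \<in> {0..1}" and s_eq: "t + s = (t + real n) + u"
          using False s unfolding u_def by auto
        have "dist (\<xi> (t + s)) (\<phi> u (\<xi> (t + real n))) < \<eta> / 2"
          using pseudotrajectory_dist[OF ps u, of "t + real n"] unfolding s_eq by simp
        moreover have "dist (\<phi> u (\<xi> (t + real n))) (\<phi> u (\<phi> (real n) (\<xi> t))) < \<eta> / 2"
          using \<delta>[OF u] tracksD[OF n, of "real n" t] pseudotrajectory_in_M[OF ps]
            flow_in_M[OF fl pseudotrajectory_in_M[OF ps]] by simp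
        moreover have "\<phi> u (\<phi> (real n) (\<xi> t)) = \<phi> s (\<xi> t)"
          using flow_add[OF fl pseudotrajectory_in_M[OF ps], of u "real n" t] u_def by simp
        ultimately show ?thesis
          using dist_triangle[of "\<xi> (t + s)" "\<phi> s (\<xi> t)" "\<phi> u (\<xi> (t + real n))"] by simp
      qed
    qed
    then show "\<exists>d>0. \<forall>\<xi>. pseudotrajectory \<phi> M d \<xi> \<longrightarrow> tracks \<phi> \<xi> (real (Suc n)) \<eta>"
      using \<open>d > 0\<close> \<open>\<eta> > 0\<close> by (intro exI[of _ "min d (\<eta> / 2)"]) auto
  qed
qed

lemma pseudotrajectory_tracks:
  assumes "topological_flow \<phi> M" "compact M" "\<eta> > 0"
  obtains d where "d > 0" "\<And>\<xi>. pseudotrajectory \<phi> M d \<xi> \<Longrightarrow> tracks \<phi> \<xi> S \<eta>"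
proof -
  obtain d where "d > 0" and d: "\<And>\<xi>. pseudotrajectory \<phi> M d \<xi> \<Longrightarrow> tracks \<phi> \<xi> (real (nat \<lceil>S\<rceil>)) \<eta>"
    using pseudotrajectory_tracks_nat[OF assms(1,2), of "nat \<lceil>S\<rceil>"] assms(3) by blast
  have "S \<le> real (nat \<lceil>S\<rceil>)"
    by linarith
  then have "tracks \<phi> \<xi> S \<eta>" if "pseudotrajectory \<phi> M d \<xi>" for \<xi>
    using d[OF that] unfolding tracks_def by (meson atLeastAtMost_iff order_trans)
  then show thesis
    using that \<open>d > 0\<close> by blast
qed

lemma pseudotrajectory_reverse:
  assumes fl: "topological_flow \<phi> M" and cM: "compact M" and "\<eta> > 0"
  obtains d where "d > 0"
    "\<And>\<xi>. pseudotrajectory \<phi> M d \<xi> \<Longrightarrow> pseudotrajectory (\<lambda>t. \<phi> (- t)) M \<eta> (\<lambda>t. \<xi> (- t))"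
proof -
  obtain d where "d > 0" and d: "\<And>u y z. u \<in> {-1..0} \<Longrightarrow> y \<in> M \<Longrightarrow> z \<in> M \<Longrightarrow>
      dist y z < d \<Longrightarrow> dist (\<phi> u y) (\<phi> u z) < \<eta>"
    using flow_uniformly_continuous[OF fl cM \<open>\<eta> > 0\<close>] by blast
  have "dist (\<xi> (- (t + s))) (\<phi> (- s) (\<xi> (- t))) < \<eta>"
    if ps: "pseudotrajectory \<phi> M d \<xi>" and s: "s \<in> {0..1}" for \<xi> t s
  proof -
    define y where "y = \<xi> (- (t + s))"
    have y: "y \<in> M"
      unfolding y_def using pseudotrajectory_in_M[OF ps] .
    have "dist (\<xi> (- t)) (\<phi> s y) < d"
      using pseudotrajectory_dist[OF ps s, of "- (t + s)"] unfolding y_def by simp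
    then have "dist (\<phi> (- s) (\<xi> (- t))) (\<phi> (- s) (\<phi> s y)) < \<eta>"
      using d[of "- s"] s y pseudotrajectory_in_M[OF ps] flow_in_M[OF fl y] by simp
    then show ?thesis
      using flow_inverse[OF fl y] unfolding y_def by (simp add: dist_commute)
  qed
  then show thesis
    using that[OF \<open>d > 0\<close>] pseudotrajectory_in_M unfolding pseudotrajectory_def by blast
qed

definition traps :: "(real \<Rightarrow> 'a::metric_space) \<Rightarrow> 'a \<Rightarrow> real \<Rightarrow> real \<Rightarrow> bool" where
  "traps \<xi> p r R \<longleftrightarrow> (\<forall>t t'. t \<le> t' \<longrightarrow> dist p (\<xi> t) < r \<longrightarrow> dist p (\<xi> t') < R)"

lemma trapsD: "traps \<xi> p r R \<Longrightarrow> dist p (\<xi> t) < r \<Longrightarrow> t \<le> t' \<Longrightarrow> dist p (\<xi> t') < R"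
  unfolding traps_def by blast

lemma traps_reverseD:
  "traps (\<lambda>t. \<xi> (- t)) p r R \<Longrightarrow> dist p (\<xi> t) < r \<Longrightarrow> t' \<le> t \<Longrightarrow> dist p (\<xi> t') < R"
  using trapsD[of "\<lambda>t. \<xi> (- t)" p r R "- t" "- t'"] by simp

lemma traps_mono: "traps \<xi> p r R \<Longrightarrow> r' \<le> r \<Longrightarrow> traps \<xi> p r' R"
  unfolding traps_def by force

lemma traps_orbitD:
  assumes "traps (\<lambda>s. \<phi> s x) p r R" "topological_flow \<phi> M" "x \<in> M" "dist p x < r" "s \<ge> 0"
  shows "dist p (\<phi> s x) < R"
  using trapsD[OF assms(1), of 0 s] assms(4,5) flow_zero[OF assms(2,3)] by simp

lemma traps_by_return:
  assumes "T > 0"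
    and return: "\<And>t. dist p (\<xi> t) < r \<Longrightarrow> dist p (\<xi> (t + T)) < r"
    and excursion: "\<And>t s. dist p (\<xi> t) < r \<Longrightarrow> s \<in> {0..T} \<Longrightarrow> dist p (\<xi> (t + s)) < R"
  shows "traps \<xi> p r R"
  unfolding traps_def
proof (intro allI impI)
  fix t t' assume "t \<le> t'" and start: "dist p (\<xi> t) < r"
  have k_returns: "dist p (\<xi> (t + real k * T)) < r" for k :: nat
  proof (induction k)
    case (Suc k)
    then show ?case
      using return[OF Suc.IH] by (simp add: algebra_simps)
  qed (simp add: start)
  define k where "k = nat \<lfloor>(t' - t) / T\<rfloor>"
  have "real k * T \<le> t' - t" "t' - t < real k * T + T"
    using \<open>t \<le> t'\<close> \<open>T > 0\<close> floor_divide_lower[OF \<open>T > 0\<close>, of "t' - t"]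
      floor_divide_upper[OF \<open>T > 0\<close>, of "t' - t"]
    unfolding k_def by (simp_all add: algebra_simps)
  then show "dist p (\<xi> t') < R"
    using excursion[OF k_returns[of k], of "t' - t - real k * T"] by simp
qed

section \<open>Isolated stable points\<close>

lemma lyapunov_stable_traps_orbits:
  assumes fl: "topological_flow \<phi> M" and st: "lyapunov_stable \<phi> M p" and "\<rho> > 0"
  obtains r where "r > 0" "\<And>x. x \<in> M \<Longrightarrow> traps (\<lambda>s. \<phi> s x) p r \<rho>"
proof -
  obtain U where "open U" "p \<in> U" and U: "\<forall>x\<in>U \<inter> M. \<forall>t\<ge>0. \<phi> t x \<in> ball p \<rho>"
    using st \<open>\<rho> > 0\<close> unfolding lyapunov_stable_def by (meson centre_in_ball open_ball)
  then obtain r where "r > 0" "ball p r \<subseteq> U"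
    using openE by blast
  have "traps (\<lambda>s. \<phi> s x) p r \<rho>" if x: "x \<in> M" for x
    unfolding traps_def
  proof (intro allI impI)
    fix t t' assume "t \<le> t'" "dist p (\<phi> t x) < r"
    then have "\<phi> (t' - t) (\<phi> t x) \<in> ball p \<rho>"
      using U \<open>ball p r \<subseteq> U\<close> flow_in_M[OF fl x] by auto
    then show "dist p (\<phi> t' x) < \<rho>"
      using flow_add[OF fl x, of "t' - t" t] by simp
  qed
  then show thesis
    using that \<open>r > 0\<close> by blast
qed

text \<open>On a compact part of the basin every orbit converges to the isolated limit point p,
  and compactness makes the time of arrival in a given neighbourhood uniform.\<close>
lemma stable_isolated_attracts_uniformly:
  assumes fl: "topological_flow \<phi> M" and cM: "compact M" and st: "lyapunov_stable \<phi> M p"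
    and omega: "\<And>x. x \<in> M \<Longrightarrow> omega_limit \<phi> x \<subseteq> L" and iso: "L \<inter> cball p \<rho> \<subseteq> {p}"
    and basin: "\<And>x. x \<in> M \<Longrightarrow> traps (\<lambda>s. \<phi> s x) p R \<rho>" and "c < R" "e > 0"
  obtains T where "T \<ge> 0" "\<And>x s. x \<in> M \<Longrightarrow> dist p x \<le> c \<Longrightarrow> T \<le> s \<Longrightarrow> dist p (\<phi> s x) < e"
proof -
  obtain r where "r > 0" and r: "\<And>x. x \<in> M \<Longrightarrow> traps (\<lambda>s. \<phi> s x) p r e"
    using lyapunov_stable_traps_orbits[OF fl st \<open>e > 0\<close>] by blast
  define C where "C = M \<inter> cball p c"
  have "compact C" "C \<subseteq> M"
    unfolding C_def using cM by (auto intro: compact_Int_closed)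
  have "\<exists>t\<ge>0. \<phi> t x \<in> ball p r" if x: "x \<in> C" for x
  proof -
    have "x \<in> M" "dist p x < R"
      using x \<open>c < R\<close> unfolding C_def by auto
    then have "omega_limit \<phi> x \<subseteq> cball p \<rho>"
      using traps_orbitD[OF basin fl] by (intro omega_limit_subset_closed) (auto intro: less_imp_le)
    then have "omega_limit \<phi> x \<subseteq> {p}"
      using omega[OF \<open>x \<in> M\<close>] iso by blast
    then have "p \<in> omega_limit \<phi> x"
      using omega_limit_nonempty[OF fl cM \<open>x \<in> M\<close>] by blast
    then show ?thesis
      using omega_limit_visits[of p \<phi> x "ball p r"] \<open>r > 0\<close> by auto
  qed
  then obtain T where "T \<ge> 0" and T: "\<And>x. x \<in> C \<Longrightarrow> \<exists>t\<in>{0..T}. \<phi> t x \<in> ball p r"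
    using uniform_hitting_time[OF fl \<open>compact C\<close> \<open>C \<subseteq> M\<close>] by blast
  have "dist p (\<phi> s x) < e" if x: "x \<in> M" "dist p x \<le> c" and "T \<le> s" for x s
  proof -
    obtain t where "t \<in> {0..T}" "dist p (\<phi> t x) < r"
      using T[of x] x unfolding C_def by auto
    then show ?thesis
      using trapsD[OF r[OF \<open>x \<in> M\<close>]] \<open>T \<le> s\<close> by auto
  qed
  then show thesis
    using that \<open>T \<ge> 0\<close> by blast
qed

text \<open>Within time T + 1 the flow carries the ball of radius R/2 into the ball of radius R/4,
  so a pseudotrajectory tracking the flow to within R/4 returns to the smaller ball.\<close>
lemma stable_isolated_traps_pseudotrajectories:
  assumes fl: "topological_flow \<phi> M" and cM: "compact M" and st: "lyapunov_stable \<phi> M p"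
    and "\<rho> > 0" and omega: "\<And>x. x \<in> M \<Longrightarrow> omega_limit \<phi> x \<subseteq> L" and iso: "L \<inter> cball p \<rho> \<subseteq> {p}"
  obtains r d where "0 < r" "r \<le> \<rho>" "\<And>x. x \<in> M \<Longrightarrow> traps (\<lambda>s. \<phi> s x) p (2 * r) \<rho>"
    "d > 0" "\<And>\<xi>. pseudotrajectory \<phi> M d \<xi> \<Longrightarrow> traps \<xi> p r (2 * \<rho>)"
proof -
  obtain R0 where "R0 > 0" and R0: "\<And>x. x \<in> M \<Longrightarrow> traps (\<lambda>s. \<phi> s x) p R0 \<rho>"
    using lyapunov_stable_traps_orbits[OF fl st \<open>\<rho> > 0\<close>] by blast
  define R where "R = min R0 \<rho>"
  have "R > 0" "R \<le> \<rho>"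
    unfolding R_def using \<open>R0 > 0\<close> \<open>\<rho> > 0\<close> by auto
  have basin: "traps (\<lambda>s. \<phi> s x) p R \<rho>" if "x \<in> M" for x
    using traps_mono[OF R0[OF that]] unfolding R_def by simp
  obtain T where "T \<ge> 0" and T: "\<And>x s. x \<in> M \<Longrightarrow> dist p x \<le> R / 2 \<Longrightarrow> T \<le> s \<Longrightarrow> dist p (\<phi> s x) < R / 4"
    using stable_isolated_attracts_uniformly[OF fl cM st omega iso basin, of "R / 2" "R / 4"] \<open>R > 0\<close>
    by auto
  obtain d where "d > 0" and d: "\<And>\<xi>. pseudotrajectory \<phi> M d \<xi> \<Longrightarrow> tracks \<phi> \<xi> (T + 1) (R / 4)"
    using pseudotrajectory_tracks[OF fl cM, of "R / 4"] \<open>R > 0\<close> by auto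
  have "traps \<xi> p (R / 2) (2 * \<rho>)" if ps: "pseudotrajectory \<phi> M d \<xi>" for \<xi>
  proof (rule traps_by_return)
    show "T + 1 > 0"
      using \<open>T \<ge> 0\<close> by simp
    fix t assume near: "dist p (\<xi> t) < R / 2"
    have \<xi>t: "\<xi> t \<in> M"
      using pseudotrajectory_in_M[OF ps] .
    have "dist p (\<phi> (T + 1) (\<xi> t)) < R / 4"
      using T[OF \<xi>t] near by simp
    moreover have "dist (\<xi> (t + (T + 1))) (\<phi> (T + 1) (\<xi> t)) < R / 4"
      using tracksD[OF d[OF ps], of "T + 1" t] \<open>T \<ge> 0\<close> by simp
    ultimately show "dist p (\<xi> (t + (T + 1))) < R / 2"
      using dist_triangle2[of p "\<xi> (t + (T + 1))" "\<phi> (T + 1) (\<xi> t)"] by linarith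
    fix s assume s: "s \<in> {0..T + 1}"
    have "dist p (\<phi> s (\<xi> t)) < \<rho>"
      using traps_orbitD[OF basin[OF \<xi>t] fl \<xi>t] near s \<open>R > 0\<close> by simp
    moreover have "dist (\<xi> (t + s)) (\<phi> s (\<xi> t)) < R / 4"
      using tracksD[OF d[OF ps] s] .
    ultimately show "dist p (\<xi> (t + s)) < 2 * \<rho>"
      using dist_triangle2[of p "\<xi> (t + s)" "\<phi> s (\<xi> t)"] \<open>R \<le> \<rho>\<close> \<open>\<rho> > 0\<close> by linarith
  qed
  then show thesis
    using that[of "R / 2" d] \<open>R > 0\<close> \<open>R \<le> \<rho>\<close> \<open>d > 0\<close> basin by simp
qed

section \<open>Shadowing\<close>

lemma finite_uniform_pos:
  fixes P :: "'a \<Rightarrow> real \<Rightarrow> bool"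
  assumes "finite X" and ex: "\<And>x. x \<in> X \<Longrightarrow> \<exists>r>0. P x r"
    and mono: "\<And>x r r'. x \<in> X \<Longrightarrow> P x r \<Longrightarrow> 0 < r' \<Longrightarrow> r' \<le> r \<Longrightarrow> P x r'"
  shows "\<exists>r>0. \<forall>x\<in>X. P x r"
proof -
  obtain f where f: "\<And>x. x \<in> X \<Longrightarrow> f x > 0 \<and> P x (f x)"
    using ex by metis
  have "Min (insert 1 (f ` X)) > 0"
    using f \<open>finite X\<close> by (simp add: Min_gr_iff)
  moreover have "P x (Min (insert 1 (f ` X)))" if "x \<in> X" for x
    using mono[OF that conjunct2[OF f[OF that]]] \<open>finite X\<close> that calculation by simp
  ultimately show ?thesis
    by blast
qed

lemma finite_separated:
  fixes S :: "'a::metric_space set"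
  assumes "finite S"
  obtains \<delta> where "\<delta> > 0" "\<And>p q. p \<in> S \<Longrightarrow> q \<in> S \<Longrightarrow> p \<noteq> q \<Longrightarrow> \<delta> \<le> dist p q"
proof -
  have "\<exists>\<delta>>0. \<forall>(p, q)\<in>S \<times> S. p \<noteq> q \<longrightarrow> \<delta> \<le> dist p q"
  proof (rule finite_uniform_pos)
    fix pq assume "pq \<in> S \<times> S"
    show "\<exists>\<delta>>0. case pq of (p, q) \<Rightarrow> p \<noteq> q \<longrightarrow> \<delta> \<le> dist p q"
      by (cases "fst pq = snd pq") (auto intro: exI[of _ 1] exI[of _ "dist (fst pq) (snd pq)"])
  qed (use \<open>finite S\<close> in auto)
  then show thesis
    using that by auto
qed

lemma traps_unique_point:
  assumes sep: "\<And>p q. p \<in> P \<Longrightarrow> q \<in> P \<Longrightarrow> p \<noteq> q \<Longrightarrow> 2 * R \<le> dist p q"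
    and traps: "\<And>p. p \<in> P \<Longrightarrow> traps \<xi> p r R" and "r \<le> R"
    and H: "{t. \<exists>p\<in>P. dist p (\<xi> t) < r} \<noteq> {}" "\<not> bdd_below {t. \<exists>p\<in>P. dist p (\<xi> t) < r}"
  shows "\<exists>p\<in>P. \<forall>t. dist p (\<xi> t) < R"
proof -
  obtain t0 p0 where p0: "p0 \<in> P" "dist p0 (\<xi> t0) < r"
    using H(1) by blast
  have "dist p0 (\<xi> t) < R" for t
  proof -
    have "\<not> (\<forall>t'\<in>{t. \<exists>p\<in>P. dist p (\<xi> t) < r}. min t t0 \<le> t')"
      using H(2) unfolding bdd_below_def by blast
    then obtain t' p where p: "p \<in> P" "dist p (\<xi> t') < r" and "t' \<le> min t t0"
      by (auto simp: not_le less_imp_le)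
    then have "dist p (\<xi> t0) < R" "dist p (\<xi> t) < R"
      using trapsD[OF traps] by auto
    moreover have "dist p p0 < 2 * R"
      using dist_triangle2[of p p0 "\<xi> t0"] p0(2) \<open>r \<le> R\<close> calculation(1) by linarith
    ultimately show ?thesis
      using sep[OF p(1) p0(1)] by fastforce
  qed
  then show ?thesis
    using p0(1) by blast
qed

lemma shift_in_Rep: "(\<lambda>t. t - \<sigma>) \<in> Rep"
proof -
  have "homeomorphism UNIV UNIV (\<lambda>t::real. t - \<sigma>) (\<lambda>t. t + \<sigma>)"
    unfolding homeomorphism_def
  proof (intro conjI)
    show "range (\<lambda>t::real. t - \<sigma>) = UNIV" "range (\<lambda>t::real. t + \<sigma>) = UNIV"
      by (simp_all add: surj_def)
  qed (auto intro!: continuous_intros)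
  moreover have "mono (\<lambda>t::real. t - \<sigma>)"
    by (auto simp: mono_def)
  ultimately show ?thesis
    unfolding Rep_def by blast
qed

locale finite_singular_limit_set =
  fixes \<phi> :: "real \<Rightarrow> 'a::metric_space \<Rightarrow> 'a" and M :: "'a set"
  assumes compact: "compact M" and flow: "topological_flow \<phi> M"
    and finite_limit_set: "finite (limit_set \<phi> M)"
    and limit_set_singular: "\<And>p. p \<in> limit_set \<phi> M \<Longrightarrow>
      singularity \<phi> M p \<and> (lyapunov_stable \<phi> M p \<or> lyapunov_unstable \<phi> M p)"
begin

abbreviation L :: "'a set" where
  "L \<equiv> limit_set \<phi> M"

text \<open>The direction of time in which a point of L attracts nearby orbits.\<close>
definition direction :: "'a \<Rightarrow> real" where
  "direction p = (if lyapunov_stable \<phi> M p then 1 else - 1)"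

lemma direction_cases: "direction p = 1 \<or> direction p = - 1"
  unfolding direction_def by simp

lemma limit_set_in_M: "p \<in> L \<Longrightarrow> p \<in> M"
  using limit_set_singular unfolding singularity_def by blast

lemma limit_set_fixed: "p \<in> L \<Longrightarrow> \<phi> t p = p"
  using limit_set_singular unfolding singularity_def by blast

lemma omega_limit_in_limit_set: "x \<in> M \<Longrightarrow> omega_limit \<phi> x \<subseteq> L"
  unfolding limit_set_def by blast

lemma omega_limit_reverse_in_limit_set: "x \<in> M \<Longrightarrow> omega_limit (\<lambda>t. \<phi> (- t)) x \<subseteq> L"
  using omega_limit_reverse[of \<phi> x] unfolding limit_set_def by blast

lemma local_traps:
  assumes "p \<in> L" "\<rho> > 0" "L \<inter> cball p \<rho> \<subseteq> {p}"
  shows "\<exists>r>0. (\<forall>x\<in>M. traps (\<lambda>s. \<phi> (direction p * s) x) p (2 * r) \<rho>) \<and>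
    (\<exists>d>0. \<forall>\<xi>. pseudotrajectory \<phi> M d \<xi> \<longrightarrow> traps (\<lambda>t. \<xi> (direction p * t)) p r (2 * \<rho>))"
proof (cases "lyapunov_stable \<phi> M p")
  case True
  then have "direction p = 1"
    by (simp add: direction_def)
  obtain r d where "0 < r" "r \<le> \<rho>" "\<And>x. x \<in> M \<Longrightarrow> traps (\<lambda>s. \<phi> s x) p (2 * r) \<rho>"
    "d > 0" "\<And>\<xi>. pseudotrajectory \<phi> M d \<xi> \<Longrightarrow> traps \<xi> p r (2 * \<rho>)"
    using stable_isolated_traps_pseudotrajectories[OF flow compact True assms(2)
        omega_limit_in_limit_set assms(3)] by blast
  then show ?thesis
    unfolding \<open>direction p = 1\<close> by auto
next
  case False
  then have "direction p = - 1"
    by (simp add: direction_def)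
  have "lyapunov_stable (\<lambda>t. \<phi> (- t)) M p"
    using limit_set_singular[OF assms(1)] False lyapunov_stable_reverse by blast
  then obtain r d' where "0 < r" "r \<le> \<rho>" "\<And>x. x \<in> M \<Longrightarrow> traps (\<lambda>s. \<phi> (- s) x) p (2 * r) \<rho>"
    and "d' > 0" and d': "\<And>\<xi>. pseudotrajectory (\<lambda>t. \<phi> (- t)) M d' \<xi> \<Longrightarrow> traps \<xi> p r (2 * \<rho>)"
    using stable_isolated_traps_pseudotrajectories[OF topological_flow_reverse[OF flow] compact _
        assms(2) omega_limit_reverse_in_limit_set assms(3)] by blast
  moreover obtain d where "d > 0"
    "\<And>\<xi>. pseudotrajectory \<phi> M d \<xi> \<Longrightarrow> pseudotrajectory (\<lambda>t. \<phi> (- t)) M d' (\<lambda>t. \<xi> (- t))"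
    using pseudotrajectory_reverse[OF flow compact \<open>d' > 0\<close>] by blast
  ultimately show ?thesis
    unfolding \<open>direction p = - 1\<close> by (intro exI[of _ r] conjI exI[of _ d]) auto
qed

lemma uniform_traps:
  assumes "\<rho> > 0" "\<And>p. p \<in> L \<Longrightarrow> L \<inter> cball p \<rho> \<subseteq> {p}"
  obtains r d where "0 < r" "r \<le> \<rho>"
    "\<And>p x. p \<in> L \<Longrightarrow> x \<in> M \<Longrightarrow> traps (\<lambda>s. \<phi> (direction p * s) x) p (2 * r) \<rho>"
    "d > 0" "\<And>p \<xi>. p \<in> L \<Longrightarrow> pseudotrajectory \<phi> M d \<xi> \<Longrightarrow> traps (\<lambda>t. \<xi> (direction p * t)) p r (2 * \<rho>)"
proof -
  have "\<exists>r>0. \<forall>p\<in>L. (\<forall>x\<in>M. traps (\<lambda>s. \<phi> (direction p * s) x) p (2 * r) \<rho>) \<and>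
    (\<exists>d>0. \<forall>\<xi>. pseudotrajectory \<phi> M d \<xi> \<longrightarrow> traps (\<lambda>t. \<xi> (direction p * t)) p r (2 * \<rho>))"
  proof (rule finite_uniform_pos[OF finite_limit_set local_traps[OF _ assms(1) assms(2)]])
    fix p and r r' :: real assume "r' \<le> r"
    then show "(\<forall>x\<in>M. traps (\<lambda>s. \<phi> (direction p * s) x) p (2 * r) \<rho>) \<and>
      (\<exists>d>0. \<forall>\<xi>. pseudotrajectory \<phi> M d \<xi> \<longrightarrow> traps (\<lambda>t. \<xi> (direction p * t)) p r (2 * \<rho>)) \<Longrightarrow>
      (\<forall>x\<in>M. traps (\<lambda>s. \<phi> (direction p * s) x) p (2 * r') \<rho>) \<and>
      (\<exists>d>0. \<forall>\<xi>. pseudotrajectory \<phi> M d \<xi> \<longrightarrow> traps (\<lambda>t. \<xi> (direction p * t)) p r' (2 * \<rho>))"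
      by (meson mult_left_mono traps_mono zero_le_numeral)
  qed
  then obtain r where "r > 0" and r: "\<And>p. p \<in> L \<Longrightarrow>
      (\<forall>x\<in>M. traps (\<lambda>s. \<phi> (direction p * s) x) p (2 * r) \<rho>) \<and>
      (\<exists>d>0. \<forall>\<xi>. pseudotrajectory \<phi> M d \<xi> \<longrightarrow> traps (\<lambda>t. \<xi> (direction p * t)) p r (2 * \<rho>))"
    by blast
  have "\<exists>d>0. \<forall>p\<in>L. \<forall>\<xi>. pseudotrajectory \<phi> M d \<xi> \<longrightarrow> traps (\<lambda>t. \<xi> (direction p * t)) p r (2 * \<rho>)"
  proof (rule finite_uniform_pos[OF finite_limit_set])
    show "\<exists>d>0. \<forall>\<xi>. pseudotrajectory \<phi> M d \<xi> \<longrightarrow> traps (\<lambda>t. \<xi> (direction p * t)) p r (2 * \<rho>)"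
      if "p \<in> L" for p
      using r[OF that] by blast
  qed (use pseudotrajectory_mono in blast)
  then obtain d where "d > 0" and d: "\<And>p \<xi>. p \<in> L \<Longrightarrow> pseudotrajectory \<phi> M d \<xi> \<Longrightarrow>
      traps (\<lambda>t. \<xi> (direction p * t)) p r (2 * \<rho>)"
    by blast
  show thesis
  proof (rule that[of "min r \<rho>" d])
    show "0 < min r \<rho>" "min r \<rho> \<le> \<rho>" "d > 0"
      using \<open>r > 0\<close> \<open>\<rho> > 0\<close> \<open>d > 0\<close> by auto
    show "traps (\<lambda>s. \<phi> (direction p * s) x) p (2 * min r \<rho>) \<rho>" if "p \<in> L" "x \<in> M" for p x
      using r[OF that(1)] that(2) by (auto intro: traps_mono)
    show "traps (\<lambda>t. \<xi> (direction p * t)) p (min r \<rho>) (2 * \<rho>)"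
      if "p \<in> L" "pseudotrajectory \<phi> M d \<xi>" for p \<xi>
      using d[OF that] by (auto intro: traps_mono)
  qed
qed

text \<open>An orbit starting away from L cannot approach an unstable point of L, since an unstable
  point attracts no orbit but itself; so it reaches a stable one, uniformly in time.\<close>
lemma transit_to_stable:
  assumes "r > 0"
  obtains T where "T \<ge> 0" "\<And>x. x \<in> M \<Longrightarrow> \<forall>p\<in>L. r \<le> dist p x \<Longrightarrow>
    \<exists>s\<in>{0..T}. \<exists>a\<in>L. direction a = 1 \<and> dist a (\<phi> s x) < r / 2"
proof -
  define K where "K = M \<inter> - (\<Union>p\<in>L. ball p r)"
  define G where "G = (\<Union>a\<in>{a\<in>L. lyapunov_stable \<phi> M a}. ball a (r / 2))"
  have "compact K" "K \<subseteq> M" "open G"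
    unfolding K_def G_def using compact by (auto intro!: compact_Int_closed open_Union)
  have "\<exists>t\<ge>0. \<phi> t x \<in> G" if x: "x \<in> K" for x
  proof -
    have "x \<in> M" and far: "\<forall>p\<in>L. r \<le> dist p x"
      using x unfolding K_def by (auto simp: not_less)
    obtain q where q: "q \<in> omega_limit \<phi> x"
      using omega_limit_nonempty[OF flow compact \<open>x \<in> M\<close>] by blast
    then have "q \<in> L"
      using omega_limit_in_limit_set[OF \<open>x \<in> M\<close>] by blast
    have "\<not> lyapunov_unstable \<phi> M q"
      using lyapunov_unstable_in_omega_limit[OF flow \<open>x \<in> M\<close> _ q] far \<open>q \<in> L\<close> \<open>r > 0\<close> by force
    then have "ball q (r / 2) \<subseteq> G"
      using limit_set_singular[OF \<open>q \<in> L\<close>] \<open>q \<in> L\<close> unfolding G_def by blast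
    moreover obtain t where "t \<ge> 0" "\<phi> t x \<in> ball q (r / 2)"
      using omega_limit_visits[OF q, of "ball q (r / 2)"] \<open>r > 0\<close> by auto
    ultimately show ?thesis
      by blast
  qed
  then obtain T where "T \<ge> 0" and T: "\<And>x. x \<in> K \<Longrightarrow> \<exists>t\<in>{0..T}. \<phi> t x \<in> G"
    using uniform_hitting_time[OF flow \<open>compact K\<close> \<open>K \<subseteq> M\<close> \<open>open G\<close>] by blast
  show thesis
  proof (rule that[OF \<open>T \<ge> 0\<close>])
    fix x assume "x \<in> M" "\<forall>p\<in>L. r \<le> dist p x"
    then have "x \<in> K"
      unfolding K_def by (auto simp: not_less)
    then show "\<exists>s\<in>{0..T}. \<exists>a\<in>L. direction a = 1 \<and> dist a (\<phi> s x) < r / 2"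
      using T unfolding G_def direction_def by fastforce
  qed
qed

context
  fixes \<xi> :: "real \<Rightarrow> 'a" and \<rho> r T :: real
  assumes \<xi>_in_M: "\<And>t. \<xi> t \<in> M"
    and separated: "\<And>p q. p \<in> L \<Longrightarrow> q \<in> L \<Longrightarrow> p \<noteq> q \<Longrightarrow> 4 * \<rho> \<le> dist p q"
    and r_pos: "0 < r" and r_le: "r \<le> \<rho>"
    and orbit_traps: "\<And>p x. p \<in> L \<Longrightarrow> x \<in> M \<Longrightarrow> traps (\<lambda>s. \<phi> (direction p * s) x) p (2 * r) \<rho>"
    and \<xi>_traps: "\<And>p. p \<in> L \<Longrightarrow> traps (\<lambda>t. \<xi> (direction p * t)) p r (2 * \<rho>)"
    and transit: "\<And>x. x \<in> M \<Longrightarrow> \<forall>p\<in>L. r \<le> dist p x \<Longrightarrow>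
      \<exists>s\<in>{0..T}. \<exists>a\<in>L. direction a = 1 \<and> dist a (\<phi> s x) < r / 2"
    and T_nonneg: "T \<ge> 0"
    and tracking: "tracks \<phi> \<xi> (T + 1) (r / 2)"
begin

definition arrival_times :: "real set" where
  "arrival_times = {t. \<exists>a\<in>L. direction a = 1 \<and> dist a (\<xi> t) < r}"

lemma near_limit_set_or_arrives:
  "(\<exists>p\<in>L. dist p (\<xi> t) < r) \<or> (\<exists>s\<in>{0..T}. t + s \<in> arrival_times)"
proof (cases "\<forall>p\<in>L. r \<le> dist p (\<xi> t)")
  case True
  then obtain s a where s: "s \<in> {0..T}" and a: "a \<in> L" "direction a = 1" "dist a (\<phi> s (\<xi> t)) < r / 2"
    using transit[OF \<xi>_in_M] by blast
  moreover have "dist (\<xi> (t + s)) (\<phi> s (\<xi> t)) < r / 2"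
    using tracksD[OF tracking] s by simp
  ultimately have "dist a (\<xi> (t + s)) < r"
    using dist_triangle2[of a "\<xi> (t + s)" "\<phi> s (\<xi> t)"] by linarith
  then show ?thesis
    using s a unfolding arrival_times_def by blast
qed (auto simp: not_le)

lemma shadowed_by_fixed_point:
  assumes "p \<in> L" "\<And>t. dist p (\<xi> t) < 2 * \<rho>"
  shows "\<exists>x\<in>M. \<exists>h\<in>Rep. \<forall>t. dist (\<xi> t) (\<phi> (h t) x) < 3 * \<rho>"
proof (intro bexI allI)
  fix t
  show "dist (\<xi> t) (\<phi> (t - 0) p) < 3 * \<rho>"
    using assms(2)[of t] limit_set_fixed[OF assms(1)] r_pos r_le by (simp add: dist_commute)
qed (use shift_in_Rep[of 0] limit_set_in_M[OF assms(1)] in simp_all)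

lemma shadowed_if_never_arrives:
  assumes "arrival_times = {}"
  shows "\<exists>x\<in>M. \<exists>h\<in>Rep. \<forall>t. dist (\<xi> t) (\<phi> (h t) x) < 3 * \<rho>"
proof -
  let ?R = "{p \<in> L. direction p = - 1}"
  have "\<exists>p\<in>?R. dist p (\<xi> (- t)) < r" for t
  proof -
    obtain p where p: "p \<in> L" "dist p (\<xi> (- t)) < r"
      using near_limit_set_or_arrives[of "- t"] assms by blast
    then have "direction p \<noteq> 1"
      using assms unfolding arrival_times_def by blast
    then show ?thesis
      using p direction_cases[of p] by blast
  qed
  then have "{t. \<exists>p\<in>?R. dist p (\<xi> (- t)) < r} = UNIV"
    by blast
  moreover have "traps (\<lambda>t. \<xi> (- t)) p r (2 * \<rho>)" if "p \<in> ?R" for p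
    using \<xi>_traps[of p] that by simp
  moreover have "\<not> bdd_below (UNIV :: real set)"
  proof
    assume "bdd_below (UNIV :: real set)"
    then obtain m :: real where "\<And>x. m \<le> x"
      unfolding bdd_below_def by blast
    from this[of "m - 1"] show False
      by simp
  qed
  ultimately obtain p where "p \<in> ?R" "\<And>t. dist p (\<xi> (- t)) < 2 * \<rho>"
    using traps_unique_point[where P = ?R and R = "2 * \<rho>" and \<xi> = "\<lambda>t. \<xi> (- t)" and r = r]
      separated r_le r_pos by auto
  then show ?thesis
    using shadowed_by_fixed_point[of p] by (metis (no_types, lifting) mem_Collect_eq minus_minus)
qed

lemma shadowed_if_arrivals_unbounded:
  assumes "arrival_times \<noteq> {}" "\<not> bdd_below arrival_times"
  shows "\<exists>x\<in>M. \<exists>h\<in>Rep. \<forall>t. dist (\<xi> t) (\<phi> (h t) x) < 3 * \<rho>"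
proof -
  let ?A = "{a \<in> L. direction a = 1}"
  have "arrival_times = {t. \<exists>a\<in>?A. dist a (\<xi> t) < r}"
    unfolding arrival_times_def by blast
  moreover have "traps \<xi> a r (2 * \<rho>)" if "a \<in> ?A" for a
    using \<xi>_traps[of a] that by simp
  ultimately obtain a where "a \<in> ?A" "\<And>t. dist a (\<xi> t) < 2 * \<rho>"
    using traps_unique_point[where P = ?A and R = "2 * \<rho>" and \<xi> = \<xi> and r = r]
      assms separated r_le r_pos by auto
  then show ?thesis
    using shadowed_by_fixed_point[of a] by blast
qed

text \<open>Before time \<sigma> both the pseudotrajectory and the orbit of its point at time \<sigma> stay near the
  unstable point p, after time \<tau> both stay near the stable point a, and in between the orbit is
  tracked directly.\<close>
lemma shadowed_by_transition:
  assumes "\<sigma> \<le> \<tau>" "\<tau> \<le> \<sigma> + (T + 1)"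
    and p: "p \<in> L" "direction p = - 1" "dist p (\<xi> \<sigma>) < r"
    and a: "a \<in> L" "direction a = 1" "dist a (\<xi> \<tau>) < r"
  shows "dist (\<xi> t) (\<phi> (t - \<sigma>) (\<xi> \<sigma>)) < 3 * \<rho>"
proof -
  have x: "\<xi> \<sigma> \<in> M"
    by (rule \<xi>_in_M)
  consider "t \<le> \<sigma>" | "\<sigma> < t" "t \<le> \<tau>" | "\<tau> < t"
    by linarith
  then show ?thesis
  proof cases
    case 1
    have "dist p (\<xi> t) < 2 * \<rho>"
      using traps_reverseD[of \<xi> p r "2 * \<rho>" \<sigma> t] \<xi>_traps[OF p(1)] p 1 by simp
    moreover have "dist p (\<phi> (- (\<sigma> - t)) (\<xi> \<sigma>)) < \<rho>"
      using traps_orbitD[OF _ topological_flow_reverse[OF flow] x, of p "2 * r" \<rho> "\<sigma> - t"]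
        orbit_traps[OF p(1) x] p 1 r_pos by simp
    ultimately show ?thesis
      using dist_triangle3[of "\<xi> t" "\<phi> (t - \<sigma>) (\<xi> \<sigma>)" p] by simp
  next
    case 2
    then have "dist (\<xi> (\<sigma> + (t - \<sigma>))) (\<phi> (t - \<sigma>) (\<xi> \<sigma>)) < r / 2"
      using tracksD[OF tracking, of "t - \<sigma>" \<sigma>] assms(2) by simp
    then show ?thesis
      using r_pos r_le by simp
  next
    case 3
    have "traps \<xi> a r (2 * \<rho>)"
      using \<xi>_traps[OF a(1)] a(2) by simp
    then have "dist a (\<xi> t) < 2 * \<rho>"
      using a(3) less_imp_le[OF 3] by (rule trapsD)
    have "dist (\<xi> \<tau>) (\<phi> (\<tau> - \<sigma>) (\<xi> \<sigma>)) < r / 2"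
      using tracksD[OF tracking, of "\<tau> - \<sigma>" \<sigma>] assms(1,2) by simp
    then have "dist a (\<phi> (\<tau> - \<sigma>) (\<xi> \<sigma>)) < 2 * r"
      using dist_triangle[of a "\<phi> (\<tau> - \<sigma>) (\<xi> \<sigma>)" "\<xi> \<tau>"] a(3) r_pos by linarith
    then have "dist a (\<phi> (t - \<sigma>) (\<xi> \<sigma>)) < \<rho>"
      using trapsD[OF orbit_traps[OF a(1) x]] a(2) 3 by simp
    with \<open>dist a (\<xi> t) < 2 * \<rho>\<close> show ?thesis
      using dist_triangle3[of "\<xi> t" "\<phi> (t - \<sigma>) (\<xi> \<sigma>)" a] by simp
  qed
qed

lemma shadowed_if_arrivals_bounded:
  assumes "arrival_times \<noteq> {}" "bdd_below arrival_times"
  shows "\<exists>x\<in>M. \<exists>h\<in>Rep. \<forall>t. dist (\<xi> t) (\<phi> (h t) x) < 3 * \<rho>"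
proof -
  define \<tau>0 where "\<tau>0 = Inf arrival_times"
  have before: "t \<notin> arrival_times" if "t < \<tau>0" for t
    using cInf_lower[OF _ assms(2), of t] that unfolding \<tau>0_def by force
  obtain \<tau> where \<tau>: "\<tau> \<in> arrival_times" "\<tau> < \<tau>0 + 1 / 2"
    using cInf_lessD[OF assms(1), of "\<tau>0 + 1 / 2"] unfolding \<tau>0_def by auto
  define \<sigma> where "\<sigma> = \<tau>0 - T - 1 / 2"
  have "\<tau>0 \<le> \<tau>"
    using before \<tau>(1) by force
  then have "\<sigma> \<le> \<tau>" "\<tau> \<le> \<sigma> + (T + 1)"
    using T_nonneg \<tau>(2) unfolding \<sigma>_def by simp_all
  have "\<not> (\<exists>s\<in>{0..T}. \<sigma> + s \<in> arrival_times)"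
    using before unfolding \<sigma>_def by auto
  then obtain p where p: "p \<in> L" "dist p (\<xi> \<sigma>) < r"
    using near_limit_set_or_arrives[of \<sigma>] by blast
  moreover have "\<sigma> \<notin> arrival_times"
    using before T_nonneg unfolding \<sigma>_def by simp
  then have "direction p = - 1"
    using p direction_cases[of p] unfolding arrival_times_def by blast
  moreover obtain a where "a \<in> L" "direction a = 1" "dist a (\<xi> \<tau>) < r"
    using \<tau>(1) unfolding arrival_times_def by blast
  ultimately have "\<forall>t. dist (\<xi> t) (\<phi> (t - \<sigma>) (\<xi> \<sigma>)) < 3 * \<rho>"
    using shadowed_by_transition[OF \<open>\<sigma> \<le> \<tau>\<close> \<open>\<tau> \<le> \<sigma> + (T + 1)\<close>] by blast
  then show ?thesis
    using \<xi>_in_M[of \<sigma>] shift_in_Rep[of \<sigma>] by (intro bexI) auto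
qed

lemma shadowed:
  "\<exists>x\<in>M. \<exists>h\<in>Rep. \<forall>t. dist (\<xi> t) (\<phi> (h t) x) < 3 * \<rho>"
  by (metis shadowed_if_never_arrives shadowed_if_arrivals_unbounded shadowed_if_arrivals_bounded)

end

lemma oriented_shadowing: "oriented_shadowing \<phi> M"
  unfolding oriented_shadowing_def
proof (intro allI impI)
  fix \<epsilon> :: real assume "\<epsilon> > 0"
  obtain \<delta> where "\<delta> > 0" and \<delta>: "\<And>p q. p \<in> L \<Longrightarrow> q \<in> L \<Longrightarrow> p \<noteq> q \<Longrightarrow> \<delta> \<le> dist p q"
    using finite_separated[OF finite_limit_set] by blast
  define \<rho> where "\<rho> = min (\<epsilon> / 3) (\<delta> / 4)"
  have "\<rho> > 0" "3 * \<rho> \<le> \<epsilon>"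
    unfolding \<rho>_def using \<open>\<epsilon> > 0\<close> \<open>\<delta> > 0\<close> by auto
  have separated: "4 * \<rho> \<le> dist p q" if "p \<in> L" "q \<in> L" "p \<noteq> q" for p q
    using \<delta>[OF that] unfolding \<rho>_def by linarith
  have isolated: "L \<inter> cball p \<rho> \<subseteq> {p}" if "p \<in> L" for p
    using separated[OF that] \<open>\<rho> > 0\<close> by (force simp: not_le[symmetric])
  obtain r d0 where r: "0 < r" "r \<le> \<rho>"
    and orbit_traps: "\<And>p x. p \<in> L \<Longrightarrow> x \<in> M \<Longrightarrow> traps (\<lambda>s. \<phi> (direction p * s) x) p (2 * r) \<rho>"
    and "d0 > 0" and d0: "\<And>p \<xi>. p \<in> L \<Longrightarrow> pseudotrajectory \<phi> M d0 \<xi> \<Longrightarrow>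
      traps (\<lambda>t. \<xi> (direction p * t)) p r (2 * \<rho>)"
    using uniform_traps[OF \<open>\<rho> > 0\<close> isolated] by blast
  obtain T where "T \<ge> 0" and transit: "\<And>x. x \<in> M \<Longrightarrow> \<forall>p\<in>L. r \<le> dist p x \<Longrightarrow>
      \<exists>s\<in>{0..T}. \<exists>a\<in>L. direction a = 1 \<and> dist a (\<phi> s x) < r / 2"
    using transit_to_stable[OF \<open>0 < r\<close>] by blast
  obtain d1 where "d1 > 0" and d1: "\<And>\<xi>. pseudotrajectory \<phi> M d1 \<xi> \<Longrightarrow> tracks \<phi> \<xi> (T + 1) (r / 2)"
    using pseudotrajectory_tracks[OF flow compact, of "r / 2"] \<open>0 < r\<close> by auto
  have "\<exists>x\<in>M. \<exists>h\<in>Rep. \<forall>t. dist (\<xi> t) (\<phi> (h t) x) < \<epsilon>"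
    if ps: "pseudotrajectory \<phi> M (min d0 d1) \<xi>" for \<xi>
  proof -
    have "\<exists>x\<in>M. \<exists>h\<in>Rep. \<forall>t. dist (\<xi> t) (\<phi> (h t) x) < 3 * \<rho>"
    proof (rule shadowed[OF pseudotrajectory_in_M[OF ps] separated r orbit_traps _ transit \<open>T \<ge> 0\<close>])
      show "traps (\<lambda>t. \<xi> (direction p * t)) p r (2 * \<rho>)" if "p \<in> L" for p
        using d0[OF that pseudotrajectory_mono[OF ps]] by simp
      show "tracks \<phi> \<xi> (T + 1) (r / 2)"
        using d1[OF pseudotrajectory_mono[OF ps]] by simp
    qed
    then obtain x h where "x \<in> M" "h \<in> Rep" "\<And>t. dist (\<xi> t) (\<phi> (h t) x) < 3 * \<rho>"
      by blast
    then show ?thesis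
      using \<open>3 * \<rho> \<le> \<epsilon>\<close> by (intro bexI[of _ x] bexI[of _ h] allI) (auto intro: less_le_trans)
  qed
  then show "\<exists>d>0. \<forall>\<xi>. pseudotrajectory \<phi> M d \<xi> \<longrightarrow> (\<exists>x\<in>M. \<exists>h\<in>Rep. \<forall>t. dist (\<xi> t) (\<phi> (h t) x) < \<epsilon>)"
    using \<open>d0 > 0\<close> \<open>d1 > 0\<close> by (intro exI[of _ "min d0 d1"] conjI allI impI) simp_all
qed

end

theorem corollary1p3:
  fixes \<phi> :: "real \<Rightarrow> 'a::metric_space \<Rightarrow> 'a" and M :: "'a set"
  assumes "topological_manifold TYPE('n::euclidean_space) M"
    and "compact M"
    and "topological_flow \<phi> M"
    and "finite (limit_set \<phi> M)"
    and "\<forall>p\<in>limit_set \<phi> M. singularity \<phi> M p \<and>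
           (lyapunov_stable \<phi> M p \<or> lyapunov_unstable \<phi> M p)"
  shows "oriented_shadowing \<phi> M"
proof -
  interpret finite_singular_limit_set \<phi> M
    by unfold_locales (simp_all add: assms(2-5))
  show ?thesis
    by (rule oriented_shadowing)
qed

end
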